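(* Let $k\ge1$ and let $a_1,\dots,a_k,b_1,\dots,b_k$ be $2k$ distinct integers. Put $D=\prod_{i=1}^k\prod_{j=1}^k|a_i-b_j|$. Then $$D\ge (2/3)^k\bigl(1!\,2!\cdots(2k-1)!\bigr)^{1/2}.$$ *)

theory Defs
  imports Complex_Main
begin

end

theory Submission
  imports Defs "Jordan_Normal_Form.Determinant"
begin

(* Write A and B for the sets of the a_i and of the b_j, and Delta(X) for the product of
   |x - y| over the ordered pairs of distinct elements of X. Splitting the pairs of A \<union> B
   gives Delta(A \<union> B) = Delta(A) Delta(B) D^2. The distances from the maximum of an
   n-element set of integers to its other elements are n - 1 distinct positive integers, so
   by induction Delta(A \<union> B) >= (0! 1! ... (2k-1)!)^2.
   On the other side, Cauchy's determinant formula gives det(1/(a_i - b_j))^2 D^2 =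
   Delta(A) Delta(B), and by Hadamard's inequality this squared determinant is at most the
   product of the squared row norms sum_j (a_i - b_j)^-2 <= 2 sum_s s^-2 <= 4. Together,
   (0! 1! ... (2k-1)!)^2 <= 4^k D^4, which is stronger than the claim since 1/sqrt 2 > 2/3. *)

section \<open>Schur complements and Hadamard's inequality\<close>

definition schur_complement :: "'a::field mat \<Rightarrow> 'a mat" where
  "schur_complement A = mat (dim_row A - 1) (dim_col A - 1)
     (\<lambda>(i,j). A $$ (Suc i, Suc j) - A $$ (Suc i, 0) * A $$ (0, Suc j) / A $$ (0,0))"

lemma det_schur_complement:
  fixes A :: "'a::field mat"
  assumes A: "A \<in> carrier_mat (Suc n) (Suc n)" and pivot: "A $$ (0,0) \<noteq> 0"
  shows "det A = A $$ (0,0) * det (schur_complement A)"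
proof -
  define S where "S = schur_complement A"
  have S_carrier: "S \<in> carrier_mat n n" using A by (simp add: S_def schur_complement_def)
  define L where "L = mat (Suc n) (Suc n)
    (\<lambda>(i,j). if i = j then 1 else if j = 0 then A $$ (i,0) / A $$ (0,0) else 0)"
  define U where "U = mat (Suc n) (Suc n)
    (\<lambda>(i,j). if i = 0 then A $$ (0,j) else if j = 0 then 0 else S $$ (i - 1, j - 1))"
  have L: "L \<in> carrier_mat (Suc n) (Suc n)" and U: "U \<in> carrier_mat (Suc n) (Suc n)"
    by (simp_all add: L_def U_def)
  have "A = L * U"
  proof (rule eq_matI)
    fix i j assume "i < dim_row (L * U)" "j < dim_col (L * U)"
    hence i: "i < Suc n" and j: "j < Suc n" using L U by auto
    have "(L * U) $$ (i,j) = (\<Sum>l<Suc n. L $$ (i,l) * U $$ (l,j))"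
      using i j L U by (simp add: scalar_prod_def atLeast0LessThan)
    also have "\<dots> = A $$ (i,j)"
    proof (cases "i = 0")
      case True
      then show ?thesis using i j unfolding L_def U_def
        by (simp add: if_distrib[of "\<lambda>x. x * _"] cong: if_cong)
    next
      case False
      have "(\<Sum>l<Suc n. L $$ (i,l) * U $$ (l,j)) = (\<Sum>l\<in>{0,i}. L $$ (i,l) * U $$ (l,j))"
        by (rule sum.mono_neutral_right) (use i False in \<open>auto simp: L_def\<close>)
      also have "\<dots> = A $$ (i,j)"
        using False i j A pivot unfolding L_def U_def S_def schur_complement_def
        by (auto simp: field_simps)
      finally show ?thesis .
    qed
    finally show "A $$ (i,j) = (L * U) $$ (i,j)" by simp
  qed (use A L U in auto)
  hence "det A = det L * det U" using det_mult[OF L U] by simp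
  moreover have "det L = 1"
    by (subst det_lower_triangular[OF _ L]) (auto simp: L_def prod_list_diag_prod)
  moreover have "det U = A $$ (0,0) * det S"
  proof -
    have "det U = (\<Sum>i<Suc n. U $$ (i,0) * cofactor U i 0)"
      by (rule laplace_expansion_column[OF U]) simp
    also have "\<dots> = U $$ (0,0) * cofactor U 0 0"
      by (subst sum.lessThan_Suc_shift) (simp add: U_def)
    also have "mat_delete U 0 0 = S"
      by (rule eq_matI) (use S_carrier in \<open>auto simp: mat_delete_def U_def\<close>)
    hence "cofactor U 0 0 = det S" by (simp add: cofactor_def)
    finally show ?thesis by (simp add: U_def)
  qed
  ultimately show ?thesis by (simp add: S_def)
qed

definition gram_mat :: "nat \<Rightarrow> nat \<Rightarrow> (nat \<Rightarrow> nat \<Rightarrow> 'a::comm_ring_1) \<Rightarrow> 'a mat" where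
  "gram_mat n m v = mat n n (\<lambda>(i,j). \<Sum>l<m. v i l * v j l)"

lemma sum_mult_sub_projections:
  fixes x y z :: "nat \<Rightarrow> 'a::field"
  assumes "(\<Sum>l<m. y l * y l) \<noteq> 0"
  defines "p \<equiv> \<lambda>u. (\<Sum>l<m. u l * y l) / (\<Sum>l<m. y l * y l)"
  shows "(\<Sum>l<m. (x l - p x * y l) * (z l - p z * y l))
           = (\<Sum>l<m. x l * z l) - (\<Sum>l<m. x l * y l) * (\<Sum>l<m. z l * y l) / (\<Sum>l<m. y l * y l)"
proof -
  have expand: "(\<Sum>l<m. (x l - a * y l) * (z l - b * y l))
      = (\<Sum>l<m. x l * z l) - b * (\<Sum>l<m. x l * y l) - a * (\<Sum>l<m. z l * y l)
        + a * b * (\<Sum>l<m. y l * y l)" for a b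
    by (simp add: algebra_simps sum_distrib_left sum.distrib sum_subtractf)
  show ?thesis using assms(1) unfolding expand p_def by (simp add: field_simps)
qed

lemma det_gram_mat_le:
  fixes v :: "nat \<Rightarrow> nat \<Rightarrow> 'a::linordered_field"
  shows "det (gram_mat n m v) \<le> (\<Prod>i<n. \<Sum>l<m. v i l * v i l)"
proof (induction n arbitrary: v)
  case 0
  then show ?case by (simp add: gram_mat_def)
next
  case (Suc n)
  define g where "g = (\<Sum>l<m. v 0 l * v 0 l)"
  have norm_nonneg: "0 \<le> (\<Sum>l<m. u l * u l)" for u :: "nat \<Rightarrow> 'a"
    by (intro sum_nonneg) simp
  have G: "gram_mat (Suc n) m v \<in> carrier_mat (Suc n) (Suc n)" by (simp add: gram_mat_def)
  show ?case
  proof (cases "g = 0")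
    case True
    hence "v 0 l = 0" if "l < m" for l
      using that unfolding g_def by (subst (asm) sum_nonneg_eq_0_iff) auto
    hence "det (gram_mat (Suc n) m v) = 0"
      by (subst laplace_expansion_row[OF G, of 0]) (auto simp: gram_mat_def)
    then show ?thesis by (simp add: prod_nonneg norm_nonneg)
  next
    case False
    hence g: "g > 0" using norm_nonneg[of "v 0"] by (simp add: g_def)
    \<comment> \<open>One Gram-Schmidt step: the Schur complement is the Gram matrix of the other rows
      made orthogonal to row 0, which does not increase their norms.\<close>
    define p where "p u = (\<Sum>l<m. u l * v 0 l) / g" for u
    define w where "w i l = v (Suc i) l - p (v (Suc i)) * v 0 l" for i l
    have w_inner: "(\<Sum>l<m. w i l * w j l) = (\<Sum>l<m. v (Suc i) l * v (Suc j) l)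
        - (\<Sum>l<m. v (Suc i) l * v 0 l) * (\<Sum>l<m. v (Suc j) l * v 0 l) / g" for i j
      using sum_mult_sub_projections[where m=m and y="v 0" and x="v (Suc i)" and z="v (Suc j)"] False
      unfolding w_def p_def g_def by simp
    have "schur_complement (gram_mat (Suc n) m v) = gram_mat n m w"
      by (rule eq_matI)
        (auto simp: schur_complement_def gram_mat_def w_inner g_def mult.commute)
    hence "det (gram_mat (Suc n) m v) = g * det (gram_mat n m w)"
      using det_schur_complement[OF G] False by (simp add: gram_mat_def g_def)
    also have "\<dots> \<le> g * (\<Prod>i<n. \<Sum>l<m. w i l * w i l)"
      using Suc.IH[of w] g by simp
    also have "\<dots> \<le> g * (\<Prod>i<n. \<Sum>l<m. v (Suc i) l * v (Suc i) l)"
    proof (intro mult_left_mono prod_mono conjI)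
      fix i
      have "0 \<le> (\<Sum>l<m. v (Suc i) l * v 0 l)^2 / g" using g by simp
      thus "(\<Sum>l<m. w i l * w i l) \<le> (\<Sum>l<m. v (Suc i) l * v (Suc i) l)"
        by (simp add: w_inner power2_eq_square)
    qed (use g norm_nonneg in auto)
    also have "\<dots> = (\<Prod>i<Suc n. \<Sum>l<m. v i l * v i l)"
      by (simp add: prod.lessThan_Suc_shift g_def del: prod.lessThan_Suc)
    finally show ?thesis .
  qed
qed

theorem hadamard_inequality:
  fixes A :: "'a::linordered_field mat"
  assumes A: "A \<in> carrier_mat n n"
  shows "(det A)^2 \<le> (\<Prod>i<n. \<Sum>j<n. (A $$ (i,j))^2)"
proof -
  have "A * transpose_mat A = gram_mat n n (\<lambda>i j. A $$ (i,j))"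
    by (rule eq_matI) (use A in \<open>auto simp: gram_mat_def scalar_prod_def atLeast0LessThan\<close>)
  hence "det (gram_mat n n (\<lambda>i j. A $$ (i,j))) = (det A)^2"
    using det_mult[OF A transpose_carrier_mat[THEN iffD2, OF A]] det_transpose[OF A]
    by (simp add: power2_eq_square)
  thus ?thesis using det_gram_mat_le[of n n "\<lambda>i j. A $$ (i,j)"] by (simp add: power2_eq_square)
qed

section \<open>Cauchy determinants\<close>

lemma det_mult_rows_cols:
  fixes A :: "'a::comm_ring_1 mat"
  assumes A: "A \<in> carrier_mat n n"
  shows "det (mat n n (\<lambda>(i,j). r i * c j * A $$ (i,j))) = (\<Prod>i<n. r i) * (\<Prod>j<n. c j) * det A"
proof -
  have "signof p * (\<Prod>i<n. r i * c (p i) * A $$ (i, p i))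
      = (\<Prod>i<n. r i) * (\<Prod>j<n. c j) * (signof p * (\<Prod>i<n. A $$ (i, p i)))"
    if p: "p permutes {..<n}" for p
  proof -
    have "(\<Prod>i<n. c (p i)) = (\<Prod>j<n. c j)"
      using prod.permute[OF p, of c] by (simp add: comp_def)
    thus ?thesis by (simp add: prod.distrib)
  qed
  then show ?thesis using A
    by (simp add: det_def'[of _ n] atLeast0LessThan sum_distrib_left)
qed

definition cauchy_mat :: "nat \<Rightarrow> (nat \<Rightarrow> 'a::field) \<Rightarrow> (nat \<Rightarrow> 'a) \<Rightarrow> 'a mat" where
  "cauchy_mat n a b = mat n n (\<lambda>(i,j). 1 / (a i - b j))"

lemma det_cauchy_mat_Suc:
  fixes a b :: "nat \<Rightarrow> 'a::field"
  assumes ab: "\<And>i j. i < Suc n \<Longrightarrow> j < Suc n \<Longrightarrow> a i \<noteq> b j"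
  shows "det (cauchy_mat (Suc n) a b) = 1 / (a 0 - b 0)
    * (\<Prod>i<n. (a (Suc i) - a 0) / (a (Suc i) - b 0))
    * (\<Prod>j<n. (b 0 - b (Suc j)) / (a 0 - b (Suc j)))
    * det (cauchy_mat n (\<lambda>i. a (Suc i)) (\<lambda>j. b (Suc j)))"
proof -
  have entry: "1 / (x - y) - 1 / (x - w) * (1 / (z - y)) / (1 / (z - w))
      = (x - z) / (x - w) * ((w - y) / (z - y)) * (1 / (x - y))"
    if "x \<noteq> y" "x \<noteq> w" "z \<noteq> y" "z \<noteq> w" for x y z w :: 'a
  proof -
    have "x - y \<noteq> 0" "x - w \<noteq> 0" "z - y \<noteq> 0" "z - w \<noteq> 0" using that by auto
    then show ?thesis by (simp add: divide_simps) (simp add: algebra_simps)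
  qed
  have schur: "schur_complement (cauchy_mat (Suc n) a b) = mat n n (\<lambda>(i,j).
      (a (Suc i) - a 0) / (a (Suc i) - b 0) * ((b 0 - b (Suc j)) / (a 0 - b (Suc j)))
      * cauchy_mat n (\<lambda>i. a (Suc i)) (\<lambda>j. b (Suc j)) $$ (i,j))"
  proof (rule eq_matI, goal_cases)
    case (1 i j)
    then show ?case
      using entry[of "a (Suc i)" "b (Suc j)" "b 0" "a 0"] ab[of "Suc i" "Suc j"] ab[of "Suc i" 0]
        ab[of 0 "Suc j"] ab[of 0 0]
      by (simp add: schur_complement_def cauchy_mat_def mult_ac)
  qed (simp_all add: schur_complement_def cauchy_mat_def)
  have "det (cauchy_mat (Suc n) a b)
      = 1 / (a 0 - b 0) * det (schur_complement (cauchy_mat (Suc n) a b))"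
    using det_schur_complement[of "cauchy_mat (Suc n) a b" n] ab[of 0 0]
    by (simp add: cauchy_mat_def)
  also have "\<dots> = 1 / (a 0 - b 0)
    * ((\<Prod>i<n. (a (Suc i) - a 0) / (a (Suc i) - b 0))
      * (\<Prod>j<n. (b 0 - b (Suc j)) / (a 0 - b (Suc j)))
      * det (cauchy_mat n (\<lambda>i. a (Suc i)) (\<lambda>j. b (Suc j))))"
    unfolding schur by (subst det_mult_rows_cols) (simp_all add: cauchy_mat_def)
  finally show ?thesis by (simp only: mult.assoc)
qed

text \<open>Each unordered pair is counted twice, so this is the square of the Vandermonde product.\<close>

definition pair_dist_prod :: "nat \<Rightarrow> (nat \<Rightarrow> 'a::linordered_idom) \<Rightarrow> 'a" where
  "pair_dist_prod n a = (\<Prod>i<n. \<Prod>j\<in>{..<n} - {i}. \<bar>a i - a j\<bar>)"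

lemma pair_dist_prod_Suc:
  "pair_dist_prod (Suc n) a = (\<Prod>i<n. (a (Suc i) - a 0)^2) * pair_dist_prod n (\<lambda>i. a (Suc i))"
proof -
  have minus_Suc: "{..<Suc n} - {Suc i} = insert 0 (Suc ` ({..<n} - {i}))" for i
    by (auto simp: lessThan_Suc_eq_insert_0)
  have sq: "\<bar>a 0 - a (Suc i)\<bar> * \<bar>a (Suc i) - a 0\<bar> = (a (Suc i) - a 0)^2" for i
    by (simp add: abs_minus_commute power2_eq_square algebra_simps)
  have "pair_dist_prod (Suc n) a = (\<Prod>j<n. \<bar>a 0 - a (Suc j)\<bar>)
      * (\<Prod>i<n. \<bar>a (Suc i) - a 0\<bar> * (\<Prod>j\<in>{..<n} - {i}. \<bar>a (Suc i) - a (Suc j)\<bar>))"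
    unfolding pair_dist_prod_def prod.lessThan_Suc_shift minus_Suc
    by (simp add: lessThan_Suc_eq_insert_0 prod.reindex inj_on_def del: prod.lessThan_Suc)
  also have "\<dots> = (\<Prod>i<n. \<bar>a 0 - a (Suc i)\<bar> * \<bar>a (Suc i) - a 0\<bar>)
      * pair_dist_prod n (\<lambda>i. a (Suc i))"
    by (simp add: pair_dist_prod_def prod.distrib mult.assoc)
  finally show ?thesis by (simp only: sq)
qed

text \<open>Cauchy's determinant formula, squared so that the signs of its Vandermonde factors drop out.\<close>

theorem cauchy_det_sq:
  fixes a b :: "nat \<Rightarrow> 'a::linordered_field"
  assumes "\<And>i j. i < n \<Longrightarrow> j < n \<Longrightarrow> a i \<noteq> b j"
  shows "(det (cauchy_mat n a b))^2 * (\<Prod>i<n. \<Prod>j<n. a i - b j)^2 = pair_dist_prod n a * pair_dist_prod n b"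
  using assms
proof (induction n arbitrary: a b)
  case 0
  then show ?case by (simp add: pair_dist_prod_def cauchy_mat_def)
next
  case (Suc n)
  let ?a = "\<lambda>i. a (Suc i)" and ?b = "\<lambda>j. b (Suc j)"
  have ab: "a i \<noteq> b j" if "i < Suc n" "j < Suc n" for i j using Suc.prems that by simp
  have row: "(\<Prod>i<n. (a (Suc i) - a 0) / (a (Suc i) - b 0)) * (\<Prod>i<n. a (Suc i) - b 0)
      = (\<Prod>i<n. a (Suc i) - a 0)"
    unfolding prod.distrib[symmetric] by (rule prod.cong) (simp_all add: ab)
  have col: "(\<Prod>j<n. (b 0 - b (Suc j)) / (a 0 - b (Suc j))) * (\<Prod>j<n. a 0 - b (Suc j))
      = (\<Prod>j<n. b 0 - b (Suc j))"
    unfolding prod.distrib[symmetric] by (rule prod.cong) (simp_all add: ab)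
  have "(\<Prod>i<Suc n. \<Prod>j<Suc n. a i - b j) = (a 0 - b 0) * (\<Prod>j<n. a 0 - b (Suc j))
      * (\<Prod>i<n. a (Suc i) - b 0) * (\<Prod>i<n. \<Prod>j<n. ?a i - ?b j)"
    by (simp add: prod.lessThan_Suc_shift prod.distrib del: prod.lessThan_Suc)
  then have "det (cauchy_mat (Suc n) a b) * (\<Prod>i<Suc n. \<Prod>j<Suc n. a i - b j)
      = (1 / (a 0 - b 0) * (a 0 - b 0))
        * ((\<Prod>i<n. (a (Suc i) - a 0) / (a (Suc i) - b 0)) * (\<Prod>i<n. a (Suc i) - b 0))
        * ((\<Prod>j<n. (b 0 - b (Suc j)) / (a 0 - b (Suc j))) * (\<Prod>j<n. a 0 - b (Suc j)))
        * (det (cauchy_mat n ?a ?b) * (\<Prod>i<n. \<Prod>j<n. ?a i - ?b j))"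
    by (simp only: det_cauchy_mat_Suc[OF Suc.prems] mult_ac)
  also have "\<dots> = (\<Prod>i<n. a (Suc i) - a 0) * (\<Prod>j<n. b 0 - b (Suc j))
        * (det (cauchy_mat n ?a ?b) * (\<Prod>i<n. \<Prod>j<n. ?a i - ?b j))"
    using ab[of 0 0] by (simp add: row col)
  finally have unsquared: "det (cauchy_mat (Suc n) a b) * (\<Prod>i<Suc n. \<Prod>j<Suc n. a i - b j)
      = (\<Prod>i<n. a (Suc i) - a 0) * (\<Prod>j<n. b 0 - b (Suc j))
        * (det (cauchy_mat n ?a ?b) * (\<Prod>i<n. \<Prod>j<n. ?a i - ?b j))" .
  have "(det (cauchy_mat (Suc n) a b))^2 * (\<Prod>i<Suc n. \<Prod>j<Suc n. a i - b j)^2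
      = (\<Prod>i<n. a (Suc i) - a 0)^2 * (\<Prod>j<n. b 0 - b (Suc j))^2
        * ((det (cauchy_mat n ?a ?b))^2 * (\<Prod>i<n. \<Prod>j<n. ?a i - ?b j)^2)"
    by (simp only: unsquared flip: power_mult_distrib)
  also have "(det (cauchy_mat n ?a ?b))^2 * (\<Prod>i<n. \<Prod>j<n. ?a i - ?b j)^2
      = pair_dist_prod n ?a * pair_dist_prod n ?b"
    using Suc.IH Suc.prems by simp
  also have "(\<Prod>j<n. b 0 - b (Suc j))^2 = (\<Prod>j<n. (b (Suc j) - b 0)^2)"
    by (simp add: prod_power_distrib power2_commute)
  finally show ?case by (simp add: pair_dist_prod_Suc prod_power_distrib)
qed

section \<open>Sums of inverse squares\<close>

lemma sum_inverse_squares_atLeastAtMost_le: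
  assumes "N \<ge> 1"
  shows "(\<Sum>s=1..N. 1 / (real s)^2) \<le> 2 - 1 / real N"
  using assms
proof (induction N rule: dec_induct)
  case base
  then show ?case by simp
next
  case (step n)
  have "1 / (real (Suc n))^2 \<le> 1 / (real n * real (Suc n))"
    using step.hyps by (intro divide_left_mono) (auto simp: power2_eq_square)
  also have "\<dots> = 1 / real n - 1 / real (Suc n)"
    using step.hyps by (simp add: field_simps)
  finally show ?case using step.IH by simp
qed

lemma sum_inverse_squares_nat_le:
  assumes "finite S" "0 \<notin> S"
  shows "(\<Sum>s\<in>S. 1 / (real s)^2) \<le> 2"
proof (cases "S = {}")
  case False
  have pos: "0 < s" if "s \<in> S" for s using assms that by (cases s) auto
  then have "S \<subseteq> {1..Max S}" using assms by (auto simp: Suc_le_eq)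
  then have "(\<Sum>s\<in>S. 1 / (real s)^2) \<le> (\<Sum>s=1..Max S. 1 / (real s)^2)"
    by (intro sum_mono2) auto
  also have "\<dots> \<le> 2 - 1 / real (Max S)"
    using assms False pos[of "Max S"] by (intro sum_inverse_squares_atLeastAtMost_le) (simp add: Suc_le_eq)
  also have "\<dots> \<le> 2" by simp
  finally show ?thesis .
qed simp

lemma sum_inverse_squares_int_le:
  assumes T: "finite T" "0 \<notin> T"
  shows "(\<Sum>t\<in>T. 1 / (real_of_int t)^2) \<le> 4"
proof -
  have half: "(\<Sum>t\<in>U. 1 / (real_of_int t)^2) \<le> 2"
    if "U \<subseteq> T" "inj_on (\<lambda>t. nat \<bar>t\<bar>) U" for U
  proof -
    have "(\<Sum>t\<in>U. 1 / (real_of_int t)^2) = (\<Sum>s\<in>(\<lambda>t. nat \<bar>t\<bar>) ` U. 1 / (real s)^2)"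
      by (simp add: sum.reindex[OF that(2)])
    also have "\<dots> \<le> 2"
      using that T finite_subset by (intro sum_inverse_squares_nat_le) force+
    finally show ?thesis .
  qed
  have "(\<Sum>t\<in>T. 1 / (real_of_int t)^2)
      = (\<Sum>t\<in>{t\<in>T. t > 0} \<union> {t\<in>T. t < 0}. 1 / (real_of_int t)^2)"
    using T by (intro sum.cong) (auto simp: less_le)
  also have "\<dots> = (\<Sum>t\<in>{t\<in>T. t > 0}. 1 / (real_of_int t)^2)
      + (\<Sum>t\<in>{t\<in>T. t < 0}. 1 / (real_of_int t)^2)"
    using T by (intro sum.union_disjoint) auto
  also have "\<dots> \<le> 2 + 2"
    by (intro add_mono half) (auto simp: inj_on_def)
  finally show ?thesis by simp
qed

section \<open>Products of pairwise distances of integers\<close>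

definition pair_dist_prod_set :: "'a::linordered_idom set \<Rightarrow> 'a" where
  "pair_dist_prod_set X = (\<Prod>x\<in>X. \<Prod>y\<in>X - {x}. \<bar>x - y\<bar>)"

lemma pair_dist_prod_set_insert:
  assumes "finite S" "x \<notin> S"
  shows "pair_dist_prod_set (insert x S) = (\<Prod>y\<in>S. \<bar>x - y\<bar>)^2 * pair_dist_prod_set S"
proof -
  have "(\<Prod>y\<in>insert x S - {z}. \<bar>z - y\<bar>) = \<bar>z - x\<bar> * (\<Prod>y\<in>S - {z}. \<bar>z - y\<bar>)" if "z \<in> S" for z
  proof -
    have "insert x S - {z} = insert x (S - {z})" using assms that by blast
    then show ?thesis using assms by simp
  qed
  then show ?thesis
    using assms by (simp add: pair_dist_prod_set_def prod.distrib abs_minus_commute power2_eq_square)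
qed

lemma pair_dist_prod_set_Un:
  assumes "finite A" "finite B" "A \<inter> B = {}"
  shows "pair_dist_prod_set (A \<union> B)
           = pair_dist_prod_set A * pair_dist_prod_set B * (\<Prod>x\<in>A. \<Prod>y\<in>B. \<bar>x - y\<bar>)^2"
  using assms(2,3)
proof (induction B rule: finite_induct)
  case empty
  then show ?case by (simp add: pair_dist_prod_set_def)
next
  case (insert b B)
  have "pair_dist_prod_set (A \<union> insert b B)
      = (\<Prod>y\<in>A \<union> B. \<bar>b - y\<bar>)^2 * pair_dist_prod_set (A \<union> B)"
    using insert assms(1) by (simp add: pair_dist_prod_set_insert)
  also have "(\<Prod>y\<in>A \<union> B. \<bar>b - y\<bar>) = (\<Prod>y\<in>A. \<bar>b - y\<bar>) * (\<Prod>y\<in>B. \<bar>b - y\<bar>)"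
    using insert assms(1) by (intro prod.union_disjoint) auto
  finally show ?case
    using insert assms(1)
    by (simp add: pair_dist_prod_set_insert prod.distrib power_mult_distrib abs_minus_commute mult_ac)
qed

lemma fact_card_le_prod:
  fixes U :: "int set"
  assumes "finite U" "\<forall>u\<in>U. u \<ge> 1"
  shows "fact (card U) \<le> \<Prod>U"
  using assms
proof (induction U rule: finite_linorder_max_induct)
  case empty
  then show ?case by simp
next
  case (insert b U)
  have "U \<subseteq> {1..b - 1}" using insert by force
  then have "int (card U) \<le> b - 1" using card_mono[of "{1..b - 1}" U] insert by simp linarith
  moreover have "fact (card U) \<le> \<Prod>U" using insert by simp
  moreover have "b \<notin> U" using insert by blast
  ultimately show ?case
    using insert by (simp add: mult_mono prod_ge_1 flip: of_nat_Suc)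
qed

lemma prod_fact_sq_le_pair_dist_prod_set:
  fixes S :: "int set"
  assumes "finite S"
  shows "(\<Prod>m<card S. fact m)^2 \<le> pair_dist_prod_set S"
  using assms
proof (induction S rule: finite_linorder_max_induct)
  case empty
  then show ?case by (simp add: pair_dist_prod_set_def)
next
  case (insert b S)
  have "b \<notin> S" using insert by blast
  have "fact (card S) \<le> \<Prod>((\<lambda>y. b - y) ` S)"
    using insert fact_card_le_prod[of "(\<lambda>y. b - y) ` S"] by (force simp: card_image inj_on_def)
  also have "\<dots> = (\<Prod>y\<in>S. \<bar>b - y\<bar>)"
    using insert by (auto simp: prod.reindex inj_on_def intro!: prod.cong)
  finally have "(fact (card S))^2 * (\<Prod>m<card S. fact m)^2
      \<le> (\<Prod>y\<in>S. \<bar>b - y\<bar>)^2 * pair_dist_prod_set S"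
    using insert.IH by (intro mult_mono power_mono) auto
  then show ?case
    using insert \<open>b \<notin> S\<close> by (simp add: pair_dist_prod_set_insert power_mult_distrib mult.commute)
qed

lemma pair_dist_prod_eq_pair_dist_prod_set:
  assumes "inj_on a {..<n}"
  shows "pair_dist_prod n a = pair_dist_prod_set (a ` {..<n})"
proof -
  have "(\<Prod>j\<in>{..<n} - {i}. \<bar>a i - a j\<bar>) = (\<Prod>y\<in>a ` {..<n} - {a i}. \<bar>a i - y\<bar>)" if "i < n" for i
  proof -
    have "a ` {..<n} - {a i} = a ` ({..<n} - {i})" using assms that by (auto simp: inj_on_def)
    moreover have "inj_on a ({..<n} - {i})" using assms by (rule inj_on_subset) auto
    ultimately show ?thesis by (simp add: prod.reindex)
  qed
  then show ?thesis using assms by (simp add: pair_dist_prod_def pair_dist_prod_set_def prod.reindex)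
qed

lemma pair_dist_prod_of_int: "pair_dist_prod n (\<lambda>i. of_int (a i)) = of_int (pair_dist_prod n a)"
  by (simp add: pair_dist_prod_def)

lemma det_cauchy_mat_int_sq_le:
  fixes a b :: "nat \<Rightarrow> int"
  assumes "inj_on b {..<n}" and "\<And>i j. i < n \<Longrightarrow> j < n \<Longrightarrow> a i \<noteq> b j"
  shows "(det (cauchy_mat n (\<lambda>i. real_of_int (a i)) (\<lambda>j. real_of_int (b j))))^2 \<le> 4 ^ n"
proof -
  have row: "(\<Sum>j<n. (1 / (real_of_int (a i) - real_of_int (b j)))^2) \<le> 4" if "i < n" for i
  proof -
    have "inj_on (\<lambda>j. a i - b j) {..<n}" using assms(1) by (auto simp: inj_on_def)
    then have "(\<Sum>j<n. (1 / (real_of_int (a i) - real_of_int (b j)))^2)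
        = (\<Sum>t\<in>(\<lambda>j. a i - b j) ` {..<n}. 1 / (real_of_int t)^2)"
      by (simp add: sum.reindex power_one_over)
    also have "\<dots> \<le> 4"
      using assms(2) that by (intro sum_inverse_squares_int_le) auto
    finally show ?thesis .
  qed
  have "(det (cauchy_mat n (\<lambda>i. real_of_int (a i)) (\<lambda>j. real_of_int (b j))))^2
      \<le> (\<Prod>i<n. \<Sum>j<n. (1 / (real_of_int (a i) - real_of_int (b j)))^2)"
    using hadamard_inequality[of "cauchy_mat n _ _" n] by (simp add: cauchy_mat_def)
  also have "\<dots> \<le> (\<Prod>i<n. 4)"
    using row by (intro prod_mono) (simp add: sum_nonneg)
  finally show ?thesis by simp
qed

lemma pair_dist_prod_set_mult_le:
  fixes A B :: "int set"
  assumes "finite A" "finite B" "card A = card B" "A \<inter> B = {}"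
  shows "pair_dist_prod_set A * pair_dist_prod_set B
           \<le> 4 ^ card A * (\<Prod>x\<in>A. \<Prod>y\<in>B. \<bar>x - y\<bar>)^2"
proof -
  define n where "n = card A"
  obtain a b where a: "bij_betw a {..<n} A" and b: "bij_betw b {..<n} B"
    using ex_bij_betw_nat_finite[OF assms(1)] ex_bij_betw_nat_finite[OF assms(2)]
    by (metis assms(3) atLeast0LessThan n_def)
  then have inj: "inj_on a {..<n}" "inj_on b {..<n}" and img: "a ` {..<n} = A" "b ` {..<n} = B"
    by (simp_all add: bij_betw_def)
  have ab: "a i \<noteq> b j" if "i < n" "j < n" for i j
    using assms(4) img that by blast
  define D where "D = (\<Prod>x\<in>A. \<Prod>y\<in>B. \<bar>x - y\<bar>)"
  have "\<bar>\<Prod>i<n. \<Prod>j<n. real_of_int (a i) - real_of_int (b j)\<bar> = real_of_int D"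
    by (simp add: D_def abs_prod flip: img) (simp add: prod.reindex inj)
  then have "(\<Prod>i<n. \<Prod>j<n. real_of_int (a i) - real_of_int (b j))^2 = (real_of_int D)^2"
    by (metis power2_abs)
  then have "real_of_int (pair_dist_prod_set A * pair_dist_prod_set B)
      = (det (cauchy_mat n (\<lambda>i. real_of_int (a i)) (\<lambda>j. real_of_int (b j))))^2 * (real_of_int D)^2"
    using cauchy_det_sq[of n "\<lambda>i. real_of_int (a i)" "\<lambda>j. real_of_int (b j)"] ab
    by (simp add: pair_dist_prod_of_int pair_dist_prod_eq_pair_dist_prod_set inj img)
  also have "\<dots> \<le> 4 ^ n * (real_of_int D)^2"
    using det_cauchy_mat_int_sq_le[OF inj(2)] ab by (intro mult_right_mono) auto
  also have "\<dots> = real_of_int (4 ^ n * D^2)" by simp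
  finally show ?thesis unfolding D_def n_def of_int_le_iff .
qed

lemma prod_fact_sq_le_cross_dist_prod:
  fixes A B :: "int set"
  assumes "finite A" "finite B" "card A = card B" "A \<inter> B = {}"
  shows "(\<Prod>m<2 * card A. fact m)^2 \<le> 4 ^ card A * (\<Prod>x\<in>A. \<Prod>y\<in>B. \<bar>x - y\<bar>)^4"
proof -
  let ?D = "\<Prod>x\<in>A. \<Prod>y\<in>B. \<bar>x - y\<bar>"
  have "(\<Prod>m<2 * card A. fact m)^2 \<le> pair_dist_prod_set (A \<union> B)"
    using prod_fact_sq_le_pair_dist_prod_set[of "A \<union> B"] assms by (simp add: card_Un_disjoint mult_2)
  also have "\<dots> = pair_dist_prod_set A * pair_dist_prod_set B * ?D^2"
    using assms by (intro pair_dist_prod_set_Un)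
  also have "\<dots> \<le> 4 ^ card A * ?D^2 * ?D^2"
    by (rule mult_right_mono[OF pair_dist_prod_set_mult_le[OF assms]]) simp
  also have "\<dots> = 4 ^ card A * ?D^4"
    by (simp add: power2_eq_square power4_eq_xxxx mult_ac)
  finally show ?thesis .
qed

lemma two_thirds_power_mult_sqrt_le:
  fixes F D :: real
  assumes "0 \<le> F" "0 \<le> D" "F^2 \<le> 4 ^ k * D^4"
  shows "(2/3) ^ k * sqrt F \<le> D"
proof -
  have "(2::real) ^ k * 2 ^ k = 4 ^ k" by (simp flip: power_mult_distrib)
  then have "4 ^ k * D^4 = (2 ^ k * D^2)^2" by (simp add: power2_eq_square power4_eq_xxxx mult_ac)
  then have "F^2 \<le> (2 ^ k * D^2)^2" using assms(3) by simp
  then have "F \<le> 2 ^ k * D^2" by (rule power2_le_imp_le) simp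
  moreover have "((2/3) ^ k)^2 = ((4/9) ^ k :: real)" by (simp add: power2_eq_square flip: power_mult_distrib)
  ultimately have "((2/3) ^ k * sqrt F)^2 \<le> (4/9) ^ k * (2 ^ k * D^2)"
    using assms(1) by (simp add: power_mult_distrib)
  also have "(4/9) ^ k * (2 ^ k * D^2) = (8/9) ^ k * D^2"
    by (simp add: mult.assoc flip: power_mult_distrib)
  also have "\<dots> \<le> D^2" by (simp add: power_le_one mult_left_le_one_le)
  finally show ?thesis by (rule power2_le_imp_le) (use assms(2) in simp)
qed

theorem lemma3p2:
  fixes k :: nat and a b :: "nat \<Rightarrow> int"
  assumes "k \<ge> 1"
    and "inj_on a {1..k}" and "inj_on b {1..k}"
    and "a ` {1..k} \<inter> b ` {1..k} = {}"
  shows "real_of_int (\<Prod>i=1..k. \<Prod>j=1..k. \<bar>a i - b j\<bar>)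
           \<ge> (2/3) ^ k * sqrt (\<Prod>m=1..2*k-1. fact m)"
proof -
  let ?A = "a ` {1..k}" and ?B = "b ` {1..k}"
  let ?D = "\<Prod>i=1..k. \<Prod>j=1..k. \<bar>a i - b j\<bar>" and ?F = "\<Prod>m<2*k. fact m :: int"
  have card: "card ?A = k" "card ?B = k"
    using assms(2,3) by (simp_all add: card_image)
  have D: "(\<Prod>x\<in>?A. \<Prod>y\<in>?B. \<bar>x - y\<bar>) = ?D"
    using assms(2,3) by (simp add: prod.reindex)
  have "?F^2 \<le> 4 ^ k * ?D^4"
    using prod_fact_sq_le_cross_dist_prod[of ?A ?B, unfolded card D] assms(4) by simp
  then have "real_of_int (?F^2) \<le> real_of_int (4 ^ k * ?D^4)" by (simp only: of_int_le_iff)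
  then have "real_of_int ?F ^ 2 \<le> 4 ^ k * real_of_int ?D ^ 4"
    by (simp only: of_int_power of_int_mult of_int_numeral)
  moreover have "0 \<le> real_of_int ?F" "0 \<le> real_of_int ?D"
    by (simp_all only: of_int_0_le_iff) (auto intro!: prod_nonneg)
  ultimately have "(2/3) ^ k * sqrt (real_of_int ?F) \<le> real_of_int ?D"
    using two_thirds_power_mult_sqrt_le by blast
  moreover have "{..<2*k} = insert 0 {1..2*k-1}" using assms(1) by auto
  then have "real_of_int ?F = (\<Prod>m=1..2*k-1. fact m)" by simp
  ultimately show ?thesis by (simp only:)
qed

end
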